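(* Let $G=(V,E)$ be a simple directed graph and $f\ge 0$ an integer, and suppose $G$ satisfies the 3-reach condition. Then for any three sets $F_v,F_u,F_w$ with $F_v\subset V$, $F_u,F_w\subseteq V\setminus F_v$ and $|F_v|,|F_u|,|F_w|\le f$, we have $S_{F_v,F_u}\cap S_{F_v,F_w}\neq\emptyset$.
   Context: $\overline{X}=V\setminus X$; $G_Y$ is the subgraph induced by $Y\subseteq V$. For node $v$ and $F\subseteq V\setminus\{v\}$, $reach_v(F)=\{u\in\overline{F}: u\text{ has a directed path to }v\text{ in }G_{\overline{F}}\}$. 3-reach condition: for any $u,v\in V$ and any $F,F_u,F_v\subseteq V$ with $|F|,|F_u|,|F_v|\le f$, $u\notin F\cup F_u$, $v\notin F\cup F_v$, $reach_v(F\cup F_v)\cap reach_u(F\cup F_u)\neq\emptyset$. Reduced graph: for $F_1,F_2\subseteq V$ with $|F_1|,|F_2|\le f$, $G_{F_1,F_2}=(V,E_{F_1,F_2})$ where $E_{F_1,F_2}=E\setminus\{(u,w): u\in F_1\cup F_2,\ w\in V, w\neq u\}$ (all outgoing edges of nodes in $F_1\cup F_2$ removed, vertex set unchanged). Source component: $S_{F_1,F_2}$ is the set of nodes of $G_{F_1,F_2}$ that have directed paths in $G_{F_1,F_2}$ to all nodes of $V$. *)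

theory Defs
  imports Main
begin

definition simple_digraph :: "'a set \<Rightarrow> ('a \<times> 'a) set \<Rightarrow> bool" where
  "simple_digraph V E \<longleftrightarrow> finite V \<and> E \<subseteq> V \<times> V \<and> (\<forall>x. (x, x) \<notin> E)"

definition induced_edges :: "('a \<times> 'a) set \<Rightarrow> 'a set \<Rightarrow> ('a \<times> 'a) set" where
  "induced_edges E Y = E \<inter> (Y \<times> Y)"

definition reach :: "'a set \<Rightarrow> ('a \<times> 'a) set \<Rightarrow> 'a \<Rightarrow> 'a set \<Rightarrow> 'a set" where
  "reach V E v F = {u \<in> V - F. (u, v) \<in> (induced_edges E (V - F))\<^sup>*}"

definition three_reach :: "'a set \<Rightarrow> ('a \<times> 'a) set \<Rightarrow> nat \<Rightarrow> bool" where
  "three_reach V E f \<longleftrightarrow>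
     (\<forall>u\<in>V. \<forall>v\<in>V. \<forall>F Fu Fv.
        F \<subseteq> V \<and> Fu \<subseteq> V \<and> Fv \<subseteq> V \<and> card F \<le> f \<and> card Fu \<le> f \<and> card Fv \<le> f \<and>
        u \<notin> F \<union> Fu \<and> v \<notin> F \<union> Fv \<longrightarrow>
        reach V E v (F \<union> Fv) \<inter> reach V E u (F \<union> Fu) \<noteq> {})"

definition reduced_edges :: "('a \<times> 'a) set \<Rightarrow> 'a set \<Rightarrow> 'a set \<Rightarrow> ('a \<times> 'a) set" where
  "reduced_edges E F1 F2 = E - {(u, w). u \<in> F1 \<union> F2 \<and> w \<noteq> u}"

definition source_component :: "'a set \<Rightarrow> ('a \<times> 'a) set \<Rightarrow> 'a set \<Rightarrow> 'a set \<Rightarrow> 'a set" where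
  "source_component V E F1 F2 = {s \<in> V. \<forall>x\<in>V. (s, x) \<in> (reduced_edges E F1 F2)\<^sup>*}"

end

theory Submission
  imports Defs
begin

text \<open>
  Under 3-reach, a node \<open>a\<close> that is not the only vertex cannot have all its in-neighbours in a
  set \<open>A \<union> B\<close> containing \<open>a\<close>, with \<open>A\<close>, \<open>B\<close> disjoint of size at most \<open>f\<close>: its reach set
  outside those in-neighbours is \<open>{a}\<close>, yet 3-reach forces it to meet the reach set of another
  node computed with \<open>a\<close> removed.  Hence in \<open>G(Fv, X)\<close> every node has an ancestor outside
  \<open>Fv \<union> X\<close>.  Applying 3-reach to such ancestors gives every node of \<open>G(Fv, X)\<close> and every node of
  \<open>G(Fv, Y)\<close> a common ancestor, because paths avoiding \<open>Fv \<union> X\<close> survive in \<open>G(Fv, X)\<close>.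
  A node with the fewest ancestors is then a source of \<open>G(Fv, X)\<close>, and a common ancestor of a
  source of \<open>G(Fv, Fu)\<close> and a source of \<open>G(Fv, Fw)\<close> lies in both source components.
\<close>

lemma rtrancl_root_of_common_ancestors:
  assumes "finite V" "V \<noteq> {}"
    and common: "\<forall>a\<in>V. \<forall>b\<in>V. \<exists>z\<in>V. (z, a) \<in> R\<^sup>* \<and> (z, b) \<in> R\<^sup>*"
  shows "\<exists>s\<in>V. \<forall>x\<in>V. (s, x) \<in> R\<^sup>*"
proof -
  define anc where "anc a = {z \<in> V. (z, a) \<in> R\<^sup>*}" for a
  obtain a where a: "a \<in> V" and min: "\<And>y. y \<in> V \<Longrightarrow> card (anc a) \<le> card (anc y)"
    using assms(2) ex_has_least_nat[of "\<lambda>x. x \<in> V" _ "\<lambda>x. card (anc x)"] by blast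
  have "(a, x) \<in> R\<^sup>*" if "x \<in> V" for x
  proof -
    obtain z where z: "z \<in> V" "(z, a) \<in> R\<^sup>*" "(z, x) \<in> R\<^sup>*"
      using common a \<open>x \<in> V\<close> by blast
    have "anc z \<subseteq> anc a"
      using z(2) unfolding anc_def by (auto intro: rtrancl_trans)
    moreover have "finite (anc a)"
      using assms(1) unfolding anc_def by simp
    ultimately have "anc z = anc a"
      using min[OF z(1)] by (simp add: card_seteq)
    then have "(a, z) \<in> R\<^sup>*"
      using a unfolding anc_def by auto
    then show ?thesis
      using z(3) by (rule rtrancl_trans)
  qed
  then show ?thesis
    using a by blast
qed

lemma reach_eq_singleton:
  assumes "a \<in> V" "a \<notin> Z" "\<forall>y. (y, a) \<in> E \<longrightarrow> y \<in> Z"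
  shows "reach V E a Z = {a}"
proof -
  have "u = a" if "(u, a) \<in> (induced_edges E (V - Z))\<^sup>*" for u
    using that
  proof (cases rule: rtranclE)
    case (step y)
    then show ?thesis
      using assms(3) unfolding induced_edges_def by blast
  qed
  then show ?thesis
    using assms(1,2) unfolding reach_def by auto
qed

lemma three_reach_in_neighbour_outside:
  assumes "three_reach V E f" "1 \<le> f"
    and "a \<in> V" "w \<in> V" "w \<notin> F \<union> {a}"
    and "F \<subseteq> V" "Fu \<subseteq> V" "card F \<le> f" "card Fu \<le> f" "a \<notin> F \<union> Fu"
  shows "\<exists>y. (y, a) \<in> E \<and> y \<notin> F \<union> Fu"
proof (rule ccontr)
  assume "\<not> ?thesis"
  then have "reach V E a (F \<union> Fu) = {a}"
    using assms(3,10) by (simp add: reach_eq_singleton)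
  moreover have "a \<notin> reach V E w (F \<union> {a})"
    unfolding reach_def by simp
  moreover have "reach V E w (F \<union> {a}) \<inter> reach V E a (F \<union> Fu) \<noteq> {}"
    using assms(1)[unfolded three_reach_def, rule_format, of a w F Fu "{a}"] assms(2-10)
    by auto
  ultimately show False
    by auto
qed

lemma three_reach_in_neighbour_outside_disjoint_Un:
  assumes G: "simple_digraph V E" and R: "three_reach V E f"
    and A: "A \<subseteq> V" "card A \<le> f" and B: "B \<subseteq> V - A" "card B \<le> f"
    and a: "a \<in> A \<union> B" and w: "w \<in> V" "w \<noteq> a"
  shows "\<exists>y. (y, a) \<in> E \<and> y \<notin> A \<union> B"
proof -
  have "finite A" "finite B"
    using G A(1) B(1) unfolding simple_digraph_def by (auto intro: finite_subset)
  then have "0 < card A \<or> 0 < card B"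
    using a by (auto simp: card_gt_0_iff)
  then have "1 \<le> f"
    using A(2) B(2) by linarith
  have "a \<in> V"
    using a A(1) B(1) by blast
  have cards: "card (A - {a}) \<le> f" "card (B - {a}) \<le> f"
    using A(2) B(2) card_Diff1_le[of A a] card_Diff1_le[of B a] by linarith+
  txt \<open>Whichever of \<open>A\<close>, \<open>B\<close> avoids \<open>w\<close> serves as the fault set shared by \<open>a\<close> and \<open>w\<close>.\<close>
  have "\<exists>y. (y, a) \<in> E \<and> y \<notin> (A - {a}) \<union> (B - {a})"
  proof (cases "w \<in> A")
    case True
    then have "w \<notin> (B - {a}) \<union> {a}"
      using B(1) w(2) by blast
    from three_reach_in_neighbour_outside[OF R \<open>1 \<le> f\<close> \<open>a \<in> V\<close> w(1) this _ _ cards(2,1)]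
    show ?thesis
      using A(1) B(1) by blast
  next
    case False
    then have "w \<notin> (A - {a}) \<union> {a}"
      using w(2) by blast
    from three_reach_in_neighbour_outside[OF R \<open>1 \<le> f\<close> \<open>a \<in> V\<close> w(1) this _ _ cards]
    show ?thesis
      using A(1) B(1) by blast
  qed
  then show ?thesis
    using G unfolding simple_digraph_def by blast
qed

lemma reduced_ancestor_outside:
  assumes G: "simple_digraph V E" and "three_reach V E f"
    and "Fv \<subseteq> V" "card Fv \<le> f" "X \<subseteq> V - Fv" "card X \<le> f"
    and "a \<in> V" "V \<noteq> {a}"
  shows "\<exists>a'\<in>V - (Fv \<union> X). (a', a) \<in> (reduced_edges E Fv X)\<^sup>*"
proof (cases "a \<in> Fv \<union> X")
  case True
  obtain w where "w \<in> V" "w \<noteq> a"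
    using assms(7,8) by blast
  then obtain y where "(y, a) \<in> E" "y \<notin> Fv \<union> X"
    using three_reach_in_neighbour_outside_disjoint_Un[OF assms(1-6) True] by blast
  moreover have "y \<in> V"
    using G \<open>(y, a) \<in> E\<close> unfolding simple_digraph_def by blast
  ultimately show ?thesis
    unfolding reduced_edges_def by blast
qed (use assms(7) in blast)

lemma reach_imp_reduced_ancestor:
  assumes "z \<in> reach V E a (F1 \<union> F2)"
  shows "(z, a) \<in> (reduced_edges E F1 F2)\<^sup>*"
proof -
  have "induced_edges E (V - (F1 \<union> F2)) \<subseteq> reduced_edges E F1 F2"
    unfolding induced_edges_def reduced_edges_def by auto
  then show ?thesis
    using assms unfolding reach_def by (blast intro: rtrancl_mono[THEN subsetD])
qed

lemma common_reduced_ancestor: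
  assumes G: "simple_digraph V E" and R: "three_reach V E f"
    and Fv: "Fv \<subseteq> V" "card Fv \<le> f"
    and X: "X \<subseteq> V - Fv" "card X \<le> f" and Y: "Y \<subseteq> V - Fv" "card Y \<le> f"
    and "a \<in> V" "b \<in> V"
  shows "\<exists>z\<in>V. (z, a) \<in> (reduced_edges E Fv X)\<^sup>* \<and> (z, b) \<in> (reduced_edges E Fv Y)\<^sup>*"
proof (cases "V = {a}")
  case False
  then have "V \<noteq> {b}"
    using \<open>a \<in> V\<close> by blast
  obtain a' where a': "a' \<in> V - (Fv \<union> X)" "(a', a) \<in> (reduced_edges E Fv X)\<^sup>*"
    using reduced_ancestor_outside[OF G R Fv X \<open>a \<in> V\<close> False] by blast
  obtain b' where b': "b' \<in> V - (Fv \<union> Y)" "(b', b) \<in> (reduced_edges E Fv Y)\<^sup>*"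
    using reduced_ancestor_outside[OF G R Fv Y \<open>b \<in> V\<close> \<open>V \<noteq> {b}\<close>] by blast
  have "reach V E b' (Fv \<union> Y) \<inter> reach V E a' (Fv \<union> X) \<noteq> {}"
    using R[unfolded three_reach_def, rule_format, of a' b' Fv X Y] a'(1) b'(1) Fv X Y by blast
  then obtain z where z: "z \<in> reach V E a' (Fv \<union> X)" "z \<in> reach V E b' (Fv \<union> Y)"
    by blast
  then have "z \<in> V"
    unfolding reach_def by blast
  moreover have "(z, a') \<in> (reduced_edges E Fv X)\<^sup>*" "(z, b') \<in> (reduced_edges E Fv Y)\<^sup>*"
    using z by (simp_all add: reach_imp_reduced_ancestor)
  ultimately show ?thesis
    using a'(2) b'(2) by (meson rtrancl_trans)
qed (use \<open>b \<in> V\<close> in auto)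

lemma source_component_nonempty:
  assumes G: "simple_digraph V E" and R: "three_reach V E f"
    and Fv: "Fv \<subseteq> V" "card Fv \<le> f" and X: "X \<subseteq> V - Fv" "card X \<le> f" and "V \<noteq> {}"
  shows "\<exists>s. s \<in> source_component V E Fv X"
proof -
  have "finite V"
    using G unfolding simple_digraph_def by blast
  moreover have "\<forall>a\<in>V. \<forall>b\<in>V. \<exists>z\<in>V.
      (z, a) \<in> (reduced_edges E Fv X)\<^sup>* \<and> (z, b) \<in> (reduced_edges E Fv X)\<^sup>*"
    using common_reduced_ancestor[OF G R Fv X X] by blast
  ultimately obtain s where "s \<in> V" "\<forall>x\<in>V. (s, x) \<in> (reduced_edges E Fv X)\<^sup>*"
    using rtrancl_root_of_common_ancestors \<open>V \<noteq> {}\<close> by blast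
  then show ?thesis
    unfolding source_component_def by blast
qed

lemma source_component_ancestor:
  assumes "s \<in> source_component V E F1 F2" "z \<in> V" "(z, s) \<in> (reduced_edges E F1 F2)\<^sup>*"
  shows "z \<in> source_component V E F1 F2"
  using assms unfolding source_component_def by (auto dest: rtrancl_trans)

theorem theorem4p14:
  fixes V :: "'a set" and E :: "('a \<times> 'a) set" and f :: nat
    and Fv Fu Fw :: "'a set"
  assumes "simple_digraph V E"
    and "three_reach V E f"
    and "Fv \<subset> V" and "Fu \<subseteq> V - Fv" and "Fw \<subseteq> V - Fv"
    and "card Fv \<le> f" and "card Fu \<le> f" and "card Fw \<le> f"
  shows "source_component V E Fv Fu \<inter> source_component V E Fv Fw \<noteq> {}"
proof -
  have Fv: "Fv \<subseteq> V" "V \<noteq> {}"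
    using assms(3) by auto
  obtain a where a: "a \<in> source_component V E Fv Fu"
    using source_component_nonempty[OF assms(1,2) Fv(1) assms(6,4,7) Fv(2)] by blast
  obtain b where b: "b \<in> source_component V E Fv Fw"
    using source_component_nonempty[OF assms(1,2) Fv(1) assms(6,5,8) Fv(2)] by blast
  have "a \<in> V" "b \<in> V"
    using a b unfolding source_component_def by auto
  then obtain z where "z \<in> V"
    "(z, a) \<in> (reduced_edges E Fv Fu)\<^sup>*" "(z, b) \<in> (reduced_edges E Fv Fw)\<^sup>*"
    using common_reduced_ancestor[OF assms(1,2) Fv(1) assms(6,4,7,5,8)] by blast
  then have "z \<in> source_component V E Fv Fu \<inter> source_component V E Fv Fw"
    using source_component_ancestor[OF a] source_component_ancestor[OF b] by blast
  then show ?thesis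
    by blast
qed

end
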